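(* Consider the following private response scheme. Fix a privacy parameter $\epsilon>0$, a response budget $K\in\mathbb{Z}_{\ge 1}$, and $P\in\mathbb{Z}_{\ge 1}$. There is a finite list of candidate patterns $\mathcal{C}_t(1),\dots,\mathcal{C}_t(|\mathcal{C}_t|)$, and each candidate is assigned to exactly $P$ distinct data owners; each data owner is assigned at most $K$ candidates in total (and never the same candidate twice). Data owner $j$, holding local data $d_j$, forms a vector $R_j\in\mathbb{Z}^{|\mathcal{C}_t|}$ with $$R_j[i]=\begin{cases}0 & \text{if } j \text{ is not assigned } \mathcal{C}_t(i),\\ \mathcal{X}_{j,i}-\mathcal{Y}_{j,i} & \text{if } j \text{ is assigned } \mathcal{C}_t(i) \text{ and } \mathcal{C}_t(i)\notin d_j,\\ 1+\mathcal{X}_{j,i}-\mathcal{Y}_{j,i} & \text{if } j \text{ is assigned } \mathcal{C}_t(i) \text{ and } \mathcal{C}_t(i)\in d_j,\end{cases}$$ where all $\mathcal{X}_{j,i},\mathcal{Y}_{j,i}$ are mutually independent random variables with the Pólya$(1/P,\,e^{-\epsilon/K})$ distribution. The vectors $R_j$ are uploaded via secure aggregation, so that the data analyst learns only the sum $\sum_j R_j$. Then this scheme satisfies $\epsilon$-distributed differential privacy for every data owner; that is, the released aggregate $\sum_j R_j$ satisfies $\epsilon$-differential privacy with respect to changing the local data $d_j$ of any single data owner $j$.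
   Context: The Pólya$(r,p)$ distribution ($r>0$, $p\in(0,1)$) has probability mass function $\mathbb{P}(\mathcal{X}=x)=\binom{r+x-1}{r-1}p^x(1-p)^r$ for $x\in\mathbb{Z}_{\ge 0}$. A two-sided geometric random variable $G(\alpha)$, $\alpha\in(0,1)$, has $\mathbb{P}(G(\alpha)=x)=\frac{1-\alpha}{1+\alpha}\alpha^{|x|}$ for $x\in\mathbb{Z}$. A randomized mechanism $M$ satisfies $\epsilon$-differential privacy if for all neighbouring inputs $S,S'$ and all sets $O$ of outputs, $\mathbb{P}(M(S)\in O)\le e^{\epsilon}\mathbb{P}(M(S')\in O)$. "Distributed differential privacy" means: individual uploads are hidden by secure aggregation (the analyst only sees their sum), and the aggregated sum satisfies (central) differential privacy. The notation $\mathcal{C}_t(i)\in d_j$ means that candidate pattern $\mathcal{C}_t(i)$ is contained in data owner $j$'s local data (e.g. the itemset or subsequence occurs in it). *)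

theory Defs
  imports "HOL-Probability.Probability"
begin

text \<open>Polya(r,p) distribution on the naturals:
  P(X = x) = binom(r+x-1, r-1) p^x (1-p)^r, where the generalized binomial
  coefficient binom(r+x-1, r-1) = binom(r+x-1, x) = (r+x-1 gchoose x).\<close>
definition polya_pmf :: "real \<Rightarrow> real \<Rightarrow> nat pmf" where
  "polya_pmf r p = embed_pmf (\<lambda>x. ((r + real x - 1) gchoose x) * p ^ x * (1 - p) powr r)"

text \<open>Data owners are the elements of the finite set J; candidates are indexed by i < n;
  asg j i means owner j is assigned candidate i; cand i is the pattern C_t(i);
  occurs c dj means pattern c is occurs in local data dj; d j is owner j's local data.\<close>
definition scheme_output ::
  "real \<Rightarrow> nat \<Rightarrow> nat \<Rightarrow> 'o set \<Rightarrow> nat \<Rightarrow> ('o \<Rightarrow> nat \<Rightarrow> bool)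
   \<Rightarrow> (nat \<Rightarrow> 'c) \<Rightarrow> ('c \<Rightarrow> 'd \<Rightarrow> bool) \<Rightarrow> ('o \<Rightarrow> 'd) \<Rightarrow> (nat \<Rightarrow> int) pmf" where
  "scheme_output \<epsilon> K P J n asg cand occurs d =
     map_pmf
       (\<lambda>N. \<lambda>i. if i < n then
                 (\<Sum>j\<in>J. if asg j i then
                    (if occurs (cand i) (d j) then 1 else 0)
                    + int (fst (N (j, i))) - int (snd (N (j, i)))
                  else 0)
               else 0)
       (Pi_pmf {(j, i). j \<in> J \<and> i < n \<and> asg j i} (0, 0)
          (\<lambda>_. pair_pmf (polya_pmf (1 / real P) (exp (- \<epsilon> / real K)))
                         (polya_pmf (1 / real P) (exp (- \<epsilon> / real K)))))"

end

theory Submission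
  imports Defs
begin

(* Polya laws with a common p convolve by adding their first parameters, so the noise that the
   P owners of a candidate add to its count is a difference of two independent Polya(1, p), i.e.
   geometric, variables with p = exp (-\<epsilon> / K): the two-sided geometric law G(p). Its pmf changes
   by at most a factor 1/p under a shift by one. Changing the data of one owner shifts the exact
   counts by at most one, and only on the at most K candidates assigned to that owner; since the
   noise is independent across candidates, the pmf of the output changes by at most
   (1/p)^K = exp \<epsilon>. *)

lemma measure_pmf_prob_le_mult:
  assumes "c \<ge> 0" "\<And>x. pmf M x \<le> c * pmf N x"
  shows "measure_pmf.prob M A \<le> c * measure_pmf.prob N A"
proof -
  have "measure_pmf.prob M A = infsetsum (pmf M) A"
    by (rule measure_pmf_conv_infsetsum)
  also have "\<dots> \<le> infsetsum (\<lambda>x. c * pmf N x) A"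
    by (rule infsetsum_mono) (auto intro: assms(2))
  also have "\<dots> = c * infsetsum (pmf N) A"
    by (rule infsetsum_cmult_right) auto
  also have "\<dots> = c * measure_pmf.prob N A"
    by (simp add: measure_pmf_conv_infsetsum)
  finally show ?thesis .
qed

lemma pmf_map_pmf_le_mult:
  assumes "c \<ge> 0" "\<And>x. pmf M x \<le> c * pmf N x"
  shows "pmf (map_pmf f M) y \<le> c * pmf (map_pmf f N) y"
  using measure_pmf_prob_le_mult[OF assms] by (simp add: pmf_map)

lemma map_pmf_add_pair_pmf_regroup:
  fixes A B C E :: "'a::plus pmf"
  shows "map_pmf (\<lambda>((a, b), (c, e)). (a + c, b + e)) (pair_pmf (pair_pmf A B) (pair_pmf C E)) =
     pair_pmf (map_pmf (\<lambda>(a, c). a + c) (pair_pmf A C)) (map_pmf (\<lambda>(b, e). b + e) (pair_pmf B E))"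
proof -
  have "map_pmf (\<lambda>((a, b), (c, e)). (a + c, b + e)) (pair_pmf (pair_pmf A B) (pair_pmf C E)) =
    do {a \<leftarrow> A; b \<leftarrow> B; c \<leftarrow> C; e \<leftarrow> E; return_pmf (a + c, b + e)}"
    by (simp add: pair_pmf_def map_pmf_def bind_assoc_pmf bind_return_pmf)
  also have "\<dots> = do {a \<leftarrow> A; c \<leftarrow> C; b \<leftarrow> B; e \<leftarrow> E; return_pmf (a + c, b + e)}"
    by (rule bind_pmf_cong[OF refl], rule bind_commute_pmf)
  also have "\<dots> = pair_pmf (map_pmf (\<lambda>(a, c). a + c) (pair_pmf A C)) (map_pmf (\<lambda>(b, e). b + e) (pair_pmf B E))"
    by (simp add: pair_pmf_def map_pmf_def bind_assoc_pmf bind_return_pmf)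
  finally show ?thesis .
qed

lemma map_pmf_sum_Pi_pmf_convolution_semigroup:
  fixes \<mu> :: "real \<Rightarrow> 'a::comm_monoid_add pmf"
  assumes add: "\<And>r s. r > 0 \<Longrightarrow> s > 0 \<Longrightarrow> map_pmf (\<lambda>(x, y). x + y) (pair_pmf (\<mu> r) (\<mu> s)) = \<mu> (r + s)"
    and "finite B" "B \<noteq> {}" "r > 0"
  shows "map_pmf (\<lambda>m. \<Sum>j\<in>B. m j) (Pi_pmf B 0 (\<lambda>_. \<mu> r)) = \<mu> (real (card B) * r)"
  using assms(2,3)
proof (induction B rule: finite_ne_induct)
  case (singleton x)
  show ?case
    by (simp add: Pi_pmf_singleton pmf.map_comp o_def)
next
  case (insert x B)
  have sum_upd: "(\<Sum>j\<in>insert x B. (f(x := y)) j) = y + (\<Sum>j\<in>B. f j)" for f and y :: 'a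
  proof -
    have "(\<Sum>j\<in>B. (f(x := y)) j) = (\<Sum>j\<in>B. f j)"
      using insert.hyps by (intro sum.cong) auto
    then show ?thesis
      using insert.hyps by simp
  qed
  have "map_pmf (\<lambda>m. \<Sum>j\<in>insert x B. m j) (Pi_pmf (insert x B) 0 (\<lambda>_. \<mu> r))
      = map_pmf (\<lambda>(y, t). y + t) (pair_pmf (\<mu> r) (map_pmf (\<lambda>m. \<Sum>j\<in>B. m j) (Pi_pmf B 0 (\<lambda>_. \<mu> r))))"
    using insert.hyps
    by (simp add: Pi_pmf_insert pmf.map_comp o_def sum_upd pair_map_pmf2 case_prod_unfold
        del: fun_upd_apply sum.insert)
  also have "\<dots> = \<mu> (r + real (card B) * r)"
    using insert.hyps assms(4) by (simp add: insert.IH add card_gt_0_iff)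
  finally show ?case
    using insert.hyps by (simp add: algebra_simps)
qed

lemma Pi_pmf_uncurry:
  fixes B :: "'i \<Rightarrow> 'j set" and q :: "'j \<times> 'i \<Rightarrow> 'b pmf"
  assumes "finite I" "\<And>i. i \<in> I \<Longrightarrow> finite (B i)"
  shows "Pi_pmf {(j, i). i \<in> I \<and> j \<in> B i} e q
           = map_pmf (\<lambda>h (j, i). h i j) (Pi_pmf I (\<lambda>_. e) (\<lambda>i. Pi_pmf (B i) e (\<lambda>j. q (j, i))))"
proof (rule pmf_eqI)
  fix N :: "'j \<times> 'i \<Rightarrow> 'b"
  define S where "S = {(j, i). i \<in> I \<and> j \<in> B i}"
  have "S = (\<lambda>(i, j). (j, i)) ` Sigma I B"
    by (auto simp: S_def image_iff)
  then have fin_S: "finite S"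
    using assms by auto
  have "inj (\<lambda>h (j, i). h i j)"
    by (auto simp: inj_def fun_eq_iff)
  note pmf_uncurry = pmf_map_inj'[OF this, of _ "\<lambda>i j. N (j, i)"]
  have pmf_inner: "pmf (Pi_pmf (B i) e (\<lambda>j. q (j, i))) (\<lambda>j. N (j, i))
      = (if \<forall>j. j \<notin> B i \<longrightarrow> N (j, i) = e then \<Prod>j\<in>B i. pmf (q (j, i)) (N (j, i)) else 0)"
    if "i \<in> I" for i
    using assms(2)[OF that] by (rule pmf_Pi)
  have rhs: "pmf (map_pmf (\<lambda>h (j, i). h i j) (Pi_pmf I (\<lambda>_. e) (\<lambda>i. Pi_pmf (B i) e (\<lambda>j. q (j, i))))) N
      = (if \<forall>i. i \<notin> I \<longrightarrow> (\<lambda>j. N (j, i)) = (\<lambda>_. e)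
         then \<Prod>i\<in>I. (if \<forall>j. j \<notin> B i \<longrightarrow> N (j, i) = e then \<Prod>j\<in>B i. pmf (q (j, i)) (N (j, i)) else 0)
         else 0)"
    using pmf_uncurry by (simp add: case_prod_unfold pmf_Pi[OF assms(1)] pmf_inner cong: prod.cong) blast
  show "pmf (Pi_pmf S e q) N = pmf (map_pmf (\<lambda>h (j, i). h i j) (Pi_pmf I (\<lambda>_. e) (\<lambda>i. Pi_pmf (B i) e (\<lambda>j. q (j, i))))) N"
  proof (cases "\<forall>x. x \<notin> S \<longrightarrow> N x = e")
    case True
    have "(\<Prod>x\<in>S. pmf (q x) (N x)) = (\<Prod>(i, j)\<in>Sigma I B. pmf (q (j, i)) (N (j, i)))"
      unfolding S_def by (rule prod.reindex_bij_witness[of _ "\<lambda>(i, j). (j, i)" "\<lambda>(j, i). (i, j)"]) auto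
    also have "\<dots> = (\<Prod>i\<in>I. \<Prod>j\<in>B i. pmf (q (j, i)) (N (j, i)))"
      using assms by (simp add: prod.Sigma)
    finally show ?thesis
      using True fin_S rhs by (auto simp: pmf_Pi S_def fun_eq_iff)
  next
    case False
    then obtain j i where "(j, i) \<notin> S" "N (j, i) \<noteq> e"
      by auto
    then show ?thesis
      using fin_S assms rhs by (auto simp: pmf_Pi S_def fun_eq_iff intro!: prod_zero)
  qed
qed

lemma set_pmf_Pi_pmf_Pi_pmf_outside:
  assumes "finite I" "\<And>i. i \<in> I \<Longrightarrow> finite (B i)"
    and "h \<in> set_pmf (Pi_pmf I (\<lambda>_. e) (\<lambda>i. Pi_pmf (B i) e (q i)))" "\<not> (i \<in> I \<and> j \<in> B i)"
  shows "h i j = e"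
proof -
  have h: "h \<in> PiE_dflt I (\<lambda>_. e) (\<lambda>i. set_pmf (Pi_pmf (B i) e (q i)))"
    using assms(1,3) by (simp add: set_Pi_pmf o_def)
  show ?thesis
  proof (cases "i \<in> I")
    case True
    with h have "h i \<in> set_pmf (Pi_pmf (B i) e (q i))"
      by (simp add: PiE_dflt_def)
    from subsetD[OF set_Pi_pmf_subset[OF assms(2)[OF True]] this] show ?thesis
      using True assms(4) by simp
  next
    case False
    with h show ?thesis
      by (simp add: PiE_dflt_def)
  qed
qed

lemma pmf_Pi_pmf_le_shift:
  fixes \<mu> :: "'i \<Rightarrow> 'a::ab_group_add pmf"
  assumes "finite I" "\<And>i. \<rho> i \<ge> 0"
    and "\<And>i x. i \<in> I \<Longrightarrow> pmf (\<mu> i) x \<le> \<rho> i * pmf (\<mu> i) (x + \<delta> i)"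
    and "\<And>i. i \<notin> I \<Longrightarrow> \<delta> i = 0"
  shows "pmf (Pi_pmf I 0 \<mu>) w \<le> (\<Prod>i\<in>I. \<rho> i) * pmf (Pi_pmf I 0 \<mu>) (\<lambda>i. w i + \<delta> i)"
proof (cases "\<forall>i. i \<notin> I \<longrightarrow> w i = 0")
  case True
  have "pmf (Pi_pmf I 0 \<mu>) w = (\<Prod>i\<in>I. pmf (\<mu> i) (w i))"
    using assms(1) True by (simp add: pmf_Pi)
  also have "\<dots> \<le> (\<Prod>i\<in>I. \<rho> i * pmf (\<mu> i) (w i + \<delta> i))"
    using assms(3) by (intro prod_mono) auto
  also have "\<dots> = (\<Prod>i\<in>I. \<rho> i) * pmf (Pi_pmf I 0 \<mu>) (\<lambda>i. w i + \<delta> i)"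
    using assms(1,4) True by (simp add: pmf_Pi prod.distrib)
  finally show ?thesis .
next
  case False
  then show ?thesis
    using assms(1,2) by (simp add: pmf_Pi_outside prod_nonneg)
qed

lemma pmf_map_pmf_add_Pi_pmf_le:
  fixes \<mu> :: "'i \<Rightarrow> 'a::ab_group_add pmf"
  assumes "finite I" "\<And>i. \<rho> i \<ge> 0"
    and "\<And>i x. i \<in> I \<Longrightarrow> pmf (\<mu> i) x \<le> \<rho> i * pmf (\<mu> i) (x + (a i - b i))"
    and "\<And>i. i \<notin> I \<Longrightarrow> a i = b i"
  shows "pmf (map_pmf (\<lambda>v i. a i + v i) (Pi_pmf I 0 \<mu>)) z
           \<le> (\<Prod>i\<in>I. \<rho> i) * pmf (map_pmf (\<lambda>v i. b i + v i) (Pi_pmf I 0 \<mu>)) z"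
proof -
  have pmf_shift: "pmf (map_pmf (\<lambda>v i. c i + v i) (Pi_pmf I 0 \<mu>)) z = pmf (Pi_pmf I 0 \<mu>) (\<lambda>i. z i - c i)"
    for c :: "'i \<Rightarrow> 'a"
    using pmf_map_inj'[of "\<lambda>v i. c i + v i" _ "\<lambda>i. z i - c i"] by (simp add: inj_def fun_eq_iff)
  show ?thesis
    unfolding pmf_shift using pmf_Pi_pmf_le_shift[of I \<rho> \<mu> "\<lambda>i. a i - b i" "\<lambda>i. z i - a i"] assms
    by (simp add: algebra_simps)
qed

section \<open>Polya distributions\<close>

lemma polya_coeff_nonneg:
  assumes "r > 0"
  shows "((r + real x - 1) gchoose x) \<ge> 0"
proof -
  have "((r + real x - 1) gchoose x) = pochhammer r x / fact x"
    by (subst gbinomial_pochhammer') (simp add: algebra_simps)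
  then show ?thesis
    using pochhammer_pos[OF assms, of x] by simp
qed

lemma polya_coeff_eq_neg_gchoose: "((r + real k - 1) gchoose k) = (-1) ^ k * ((-r) gchoose k)"
  by (simp add: gbinomial_minus)

lemma polya_sums_1:
  assumes "r > 0" "0 < p" "p < 1"
  shows "(\<lambda>x. ((r + real x - 1) gchoose x) * p ^ x * (1 - p) powr r) sums 1"
proof -
  have "(\<lambda>n. ((-r) gchoose n) * (-p) ^ n) sums (1 + -p) powr (-r)"
    using assms by (intro gen_binomial_real) simp
  moreover have "((-r) gchoose n) * (-p) ^ n = ((r + real n - 1) gchoose n) * p ^ n" for n
    by (simp add: polya_coeff_eq_neg_gchoose power_minus[of p])
  ultimately have "(\<lambda>n. ((r + real n - 1) gchoose n) * p ^ n) sums (1 - p) powr (-r)"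
    by simp
  from sums_mult2[OF this, of "(1 - p) powr r"] show ?thesis
    using assms by (simp add: powr_minus field_simps)
qed

lemma pmf_polya_pmf:
  assumes "r > 0" "0 < p" "p < 1"
  shows "pmf (polya_pmf r p) x = ((r + real x - 1) gchoose x) * p ^ x * (1 - p) powr r"
  unfolding polya_pmf_def
proof (rule pmf_embed_pmf)
  show nonneg: "0 \<le> ((r + real x - 1) gchoose x) * p ^ x * (1 - p) powr r" for x
    using polya_coeff_nonneg[OF assms(1)] assms by simp
  show "(\<integral>\<^sup>+ x. ennreal (((r + real x - 1) gchoose x) * p ^ x * (1 - p) powr r) \<partial>count_space UNIV) = 1"
    using polya_sums_1[OF assms] nonneg
    by (simp add: nn_integral_count_space_nat suminf_ennreal_eq sums_iff)
qed

lemma pmf_polya_pmf_1: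
  assumes "0 < p" "p < 1"
  shows "pmf (polya_pmf 1 p) x = p ^ x * (1 - p)"
proof -
  have "(1 + real x - 1 gchoose x) = 1"
    using binomial_gbinomial[of x x, where 'a=real] by simp
  then show ?thesis
    using assms by (simp add: pmf_polya_pmf)
qed

lemma polya_coeff_Vandermonde:
  "(\<Sum>k=0..x. ((r + real k - 1) gchoose k) * ((s + real (x - k) - 1) gchoose (x - k)))
     = ((r + s + real x - 1) gchoose x)"
proof -
  have "(\<Sum>k=0..x. ((r + real k - 1) gchoose k) * ((s + real (x - k) - 1) gchoose (x - k)))
      = (\<Sum>k=0..x. (-1) ^ x * (((-r) gchoose k) * ((-s) gchoose (x - k))))"
  proof (rule sum.cong)
    fix k assume "k \<in> {0..x}"
    then have "(-1::real) ^ k * (-1) ^ (x - k) = (-1) ^ x"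
      by (simp add: power_add[symmetric])
    then show "((r + real k - 1) gchoose k) * ((s + real (x - k) - 1) gchoose (x - k))
          = (-1) ^ x * (((-r) gchoose k) * ((-s) gchoose (x - k)))"
      by (simp only: polya_coeff_eq_neg_gchoose) (metis mult.assoc mult.left_commute)
  qed simp
  also have "\<dots> = (-1) ^ x * ((-r + -s) gchoose x)"
    by (simp add: sum_distrib_left[symmetric] gbinomial_Vandermonde)
  also have "\<dots> = ((r + s + real x - 1) gchoose x)"
    by (simp add: polya_coeff_eq_neg_gchoose[of "r + s"])
  finally show ?thesis .
qed

lemma polya_pmf_add:
  assumes "r > 0" "s > 0" "0 < p" "p < 1"
  shows "map_pmf (\<lambda>(a, b). a + b) (pair_pmf (polya_pmf r p) (polya_pmf s p)) = polya_pmf (r + s) p"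
proof (rule pmf_eqI)
  fix x :: nat
  have preimage: "(\<lambda>(a, b). a + b) -` {x} = (\<lambda>k. (k, x - k)) ` {0..x}"
    by (auto simp: image_iff intro!: bexI[where x="fst _"])
  have inj: "inj_on (\<lambda>k. (k, x - k)) {0..x}"
    by (auto simp: inj_on_def)
  have "pmf (map_pmf (\<lambda>(a, b). a + b) (pair_pmf (polya_pmf r p) (polya_pmf s p))) x
      = (\<Sum>k=0..x. pmf (polya_pmf r p) k * pmf (polya_pmf s p) (x - k))"
    by (simp add: pmf_map preimage measure_measure_pmf_finite sum.reindex[OF inj] pmf_pair)
  also have "\<dots> = (\<Sum>k=0..x. ((r + real k - 1) gchoose k) * ((s + real (x - k) - 1) gchoose (x - k)))
                    * (p ^ x * ((1 - p) powr r * (1 - p) powr s))"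
    unfolding sum_distrib_right
  proof (rule sum.cong)
    fix k assume "k \<in> {0..x}"
    then have "p ^ k * p ^ (x - k) = p ^ x"
      by (simp add: power_add[symmetric])
    then show "pmf (polya_pmf r p) k * pmf (polya_pmf s p) (x - k) =
       ((r + real k - 1) gchoose k) * ((s + real (x - k) - 1) gchoose (x - k))
         * (p ^ x * ((1 - p) powr r * (1 - p) powr s))"
      using assms by (simp add: pmf_polya_pmf)
  qed simp
  also have "\<dots> = pmf (polya_pmf (r + s) p) x"
    using assms by (simp only: polya_coeff_Vandermonde) (simp add: pmf_polya_pmf powr_add)
  finally show "pmf (map_pmf (\<lambda>(a, b). a + b) (pair_pmf (polya_pmf r p) (polya_pmf s p))) x
      = pmf (polya_pmf (r + s) p) x" .
qed

lemma pmf_map_Suc_polya_pmf_1_le: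
  assumes "0 < p" "p < 1"
  shows "pmf (map_pmf Suc (polya_pmf 1 p)) y \<le> 1 / p * pmf (polya_pmf 1 p) y"
proof (cases y)
  case 0
  moreover have "Suc -` {0} = {}"
    by auto
  ultimately have "pmf (map_pmf Suc (polya_pmf 1 p)) y = 0"
    by (simp add: pmf_map)
  then show ?thesis
    using assms by simp
next
  case (Suc k)
  have "pmf (map_pmf Suc (polya_pmf 1 p)) (Suc k) = pmf (polya_pmf 1 p) k"
    by (rule pmf_map_inj') (simp add: inj_def)
  also have "\<dots> = 1 / p * pmf (polya_pmf 1 p) (Suc k)"
    using assms by (simp add: pmf_polya_pmf_1)
  finally show ?thesis
    using Suc by simp
qed

section \<open>Two-sided geometric noise\<close>

definition polya_diff_pmf :: "real \<Rightarrow> real \<Rightarrow> int pmf" where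
  "polya_diff_pmf r p = map_pmf (\<lambda>(a, b). int a - int b) (pair_pmf (polya_pmf r p) (polya_pmf r p))"

lemma polya_diff_pmf_add:
  assumes "r > 0" "s > 0" "0 < p" "p < 1"
  shows "map_pmf (\<lambda>(x, y). x + y) (pair_pmf (polya_diff_pmf r p) (polya_diff_pmf s p))
           = polya_diff_pmf (r + s) p"
proof -
  let ?X = "polya_pmf r p" and ?Y = "polya_pmf s p"
  have "map_pmf (\<lambda>(x, y). x + y) (pair_pmf (polya_diff_pmf r p) (polya_diff_pmf s p))
      = map_pmf (\<lambda>(a, b). int a - int b)
          (map_pmf (\<lambda>((a, b), (c, e)). (a + c, b + e)) (pair_pmf (pair_pmf ?X ?X) (pair_pmf ?Y ?Y)))"
    by (simp add: polya_diff_pmf_def pair_map_pmf1 pair_map_pmf2 pmf.map_comp o_def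
        case_prod_unfold algebra_simps)
  also have "\<dots> = polya_diff_pmf (r + s) p"
    using assms by (simp add: map_pmf_add_pair_pmf_regroup polya_pmf_add polya_diff_pmf_def)
  finally show ?thesis .
qed

lemma map_pmf_uminus_polya_diff_pmf: "map_pmf uminus (polya_diff_pmf r p) = polya_diff_pmf r p"
proof -
  have "map_pmf uminus (polya_diff_pmf r p)
      = map_pmf (\<lambda>(a, b). int a - int b) (map_pmf (\<lambda>(a, b). (b, a)) (pair_pmf (polya_pmf r p) (polya_pmf r p)))"
    by (simp add: polya_diff_pmf_def pmf.map_comp o_def case_prod_unfold)
  then show ?thesis
    by (simp flip: pair_commute_pmf add: polya_diff_pmf_def)
qed

lemma pmf_polya_diff_pmf_uminus: "pmf (polya_diff_pmf r p) (- z) = pmf (polya_diff_pmf r p) z"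
  by (metis map_pmf_uminus_polya_diff_pmf inj_def neg_equal_iff_equal pmf_map_inj')

lemma pmf_polya_diff_pmf_1_le_succ:
  assumes "0 < p" "p < 1"
  shows "pmf (polya_diff_pmf 1 p) z \<le> 1 / p * pmf (polya_diff_pmf 1 p) (z + 1)"
proof -
  let ?G = "polya_pmf 1 p" and ?diff = "\<lambda>(a :: nat, b :: nat). int a - int b"
  have "map_pmf ?diff (pair_pmf (map_pmf Suc ?G) ?G) = map_pmf (\<lambda>v. v + 1) (polya_diff_pmf 1 p)"
    by (simp add: polya_diff_pmf_def pair_map_pmf1 pmf.map_comp o_def case_prod_unfold algebra_simps)
  moreover have "pmf (map_pmf (\<lambda>v. v + 1) (polya_diff_pmf 1 p)) (z + 1) = pmf (polya_diff_pmf 1 p) z"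
    by (rule pmf_map_inj') (simp add: inj_def)
  ultimately have "pmf (polya_diff_pmf 1 p) z = pmf (map_pmf ?diff (pair_pmf (map_pmf Suc ?G) ?G)) (z + 1)"
    by simp
  also have "\<dots> \<le> 1 / p * pmf (map_pmf ?diff (pair_pmf ?G ?G)) (z + 1)"
  proof (rule pmf_map_pmf_le_mult)
    show "0 \<le> 1 / p"
      using assms by simp
    fix w :: "nat \<times> nat"
    show "pmf (pair_pmf (map_pmf Suc ?G) ?G) w \<le> 1 / p * pmf (pair_pmf ?G ?G) w"
      using mult_right_mono[OF pmf_map_Suc_polya_pmf_1_le[OF assms, of "fst w"] pmf_nonneg]
      by (cases w) (simp add: pmf_pair)
  qed
  finally show ?thesis
    by (simp add: polya_diff_pmf_def)
qed

lemma pmf_polya_diff_pmf_1_le_shift: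
  assumes "0 < p" "p < 1" "\<bar>\<delta>\<bar> \<le> 1"
  shows "pmf (polya_diff_pmf 1 p) z \<le> 1 / p * pmf (polya_diff_pmf 1 p) (z + \<delta>)"
proof -
  consider "\<delta> = 0" | "\<delta> = 1" | "\<delta> = -1"
    using assms(3) by linarith
  then show ?thesis
  proof cases
    case 1
    have "1 \<le> 1 / p"
      using assms by simp
    from mult_right_mono[OF this pmf_nonneg] 1 show ?thesis
      by simp
  next
    case 2
    then show ?thesis
      using pmf_polya_diff_pmf_1_le_succ[OF assms(1,2)] by simp
  next
    case 3
    have "pmf (polya_diff_pmf 1 p) z = pmf (polya_diff_pmf 1 p) (- z)"
      by (simp add: pmf_polya_diff_pmf_uminus)
    also have "\<dots> \<le> 1 / p * pmf (polya_diff_pmf 1 p) (- z + 1)"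
      by (rule pmf_polya_diff_pmf_1_le_succ[OF assms(1,2)])
    also have "- z + 1 = - (z + \<delta>)"
      using 3 by simp
    finally show ?thesis
      by (simp only: pmf_polya_diff_pmf_uminus)
  qed
qed

lemma map_pmf_sum_Pi_pmf_polya_diff:
  assumes "finite J" "B \<subseteq> J" "card B = P" "P \<ge> 1" "0 < p" "p < 1"
  shows "map_pmf (\<lambda>m. \<Sum>j\<in>J. int (fst (m j)) - int (snd (m j)))
           (Pi_pmf B (0, 0) (\<lambda>_. pair_pmf (polya_pmf (1 / real P) p) (polya_pmf (1 / real P) p)))
         = polya_diff_pmf 1 p"
proof -
  have fin_B: "finite B"
    using assms(2,1) by (rule finite_subset)
  have ne_B: "B \<noteq> {}"
    using assms(3,4) by auto
  let ?Q = "pair_pmf (polya_pmf (1 / real P) p) (polya_pmf (1 / real P) p)"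
  have "Pi_pmf B 0 (\<lambda>_. polya_diff_pmf (1 / real P) p)
      = map_pmf (\<lambda>m. (\<lambda>(a, b). int a - int b) \<circ> m) (Pi_pmf B (0, 0) (\<lambda>_. ?Q))"
    unfolding polya_diff_pmf_def by (rule Pi_pmf_map[OF fin_B]) simp
  then have "map_pmf (\<lambda>m. \<Sum>j\<in>J. int (fst (m j)) - int (snd (m j))) (Pi_pmf B (0, 0) (\<lambda>_. ?Q))
      = map_pmf (\<lambda>m. \<Sum>j\<in>J. m j) (Pi_pmf B 0 (\<lambda>_. polya_diff_pmf (1 / real P) p))"
    by (simp add: pmf.map_comp o_def case_prod_unfold)
  also have "\<dots> = map_pmf (\<lambda>m. \<Sum>j\<in>B. m j) (Pi_pmf B 0 (\<lambda>_. polya_diff_pmf (1 / real P) p))"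
  proof (rule map_pmf_cong[OF refl])
    fix m assume "m \<in> set_pmf (Pi_pmf B 0 (\<lambda>_. polya_diff_pmf (1 / real P) p))"
    then have "m j = 0" if "j \<notin> B" for j
      using set_Pi_pmf_subset[OF fin_B] that by fastforce
    then show "(\<Sum>j\<in>J. m j) = (\<Sum>j\<in>B. m j)"
      using assms(1,2) by (intro sum.mono_neutral_right) auto
  qed
  also have "\<dots> = polya_diff_pmf (real (card B) * (1 / real P)) p"
    using assms(4-6) fin_B ne_B
    by (intro map_pmf_sum_Pi_pmf_convolution_semigroup polya_diff_pmf_add) auto
  also have "real (card B) * (1 / real P) = 1"
    using assms(3,4) by simp
  finally show ?thesis .
qed

section \<open>The private response scheme\<close>

definition assigned_occurrences ::
  "'o set \<Rightarrow> nat \<Rightarrow> ('o \<Rightarrow> nat \<Rightarrow> bool) \<Rightarrow> (nat \<Rightarrow> 'c) \<Rightarrow> ('c \<Rightarrow> 'd \<Rightarrow> bool) \<Rightarrow> ('o \<Rightarrow> 'd)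
   \<Rightarrow> nat \<Rightarrow> int" where
  "assigned_occurrences J n asg cand occurs d i =
     (if i < n then \<Sum>j\<in>J. if asg j i \<and> occurs (cand i) (d j) then 1 else 0 else 0)"

lemma assigned_occurrences_neighbour:
  fixes J :: "'o set" and d d' :: "'o \<Rightarrow> 'd"
  assumes "finite J" "j0 \<in> J" "\<forall>j. j \<noteq> j0 \<longrightarrow> d j = d' j"
  shows "\<bar>assigned_occurrences J n asg cand occurs d i - assigned_occurrences J n asg cand occurs d' i\<bar>
           \<le> (if asg j0 i then 1 else 0)"
proof -
  define t where "t e j = (if asg j i \<and> occurs (cand i) (e j) then 1 else (0::int))" for e :: "'o \<Rightarrow> 'd" and j
  have "(\<Sum>j\<in>J - {j0}. t d j) = (\<Sum>j\<in>J - {j0}. t d' j)"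
    using assms(3) by (intro sum.cong) (auto simp: t_def)
  then have "assigned_occurrences J n asg cand occurs d i - assigned_occurrences J n asg cand occurs d' i
      = (if i < n then t d j0 - t d' j0 else 0)"
    using assms(1,2) by (simp add: assigned_occurrences_def sum.remove flip: t_def)
  then show ?thesis
    by (simp add: t_def)
qed

lemma scheme_output_eq_map_pmf_add_Pi_pmf:
  fixes J :: "'o set" and d :: "'o \<Rightarrow> 'd"
  assumes "\<epsilon> > 0" "K \<ge> 1" "P \<ge> 1" "finite J" "\<forall>i<n. card {j \<in> J. asg j i} = P"
  shows "scheme_output \<epsilon> K P J n asg cand occurs d
           = map_pmf (\<lambda>v i. assigned_occurrences J n asg cand occurs d i + v i)
               (Pi_pmf {..<n} 0 (\<lambda>_. polya_diff_pmf 1 (exp (- \<epsilon> / real K))))"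
proof -
  define p where "p = exp (- \<epsilon> / real K)"
  have p: "0 < p" "p < 1"
    using assms(1,2) by (auto simp: p_def)
  define Q where "Q = pair_pmf (polya_pmf (1 / real P) p) (polya_pmf (1 / real P) p)"
  define B where "B i = {j \<in> J. asg j i}" for i
  define diffsum where "diffsum m = (\<Sum>j\<in>J. int (fst (m j)) - int (snd (m j)))" for m :: "'o \<Rightarrow> nat \<times> nat"
  define M where "M = Pi_pmf {..<n} (\<lambda>_. (0, 0)) (\<lambda>i. Pi_pmf (B i) (0, 0) (\<lambda>_. Q))"
  have fin_B: "finite (B i)" for i
    using assms(4) by (simp add: B_def)
  have "{(j, i). j \<in> J \<and> i < n \<and> asg j i} = {(j, i). i \<in> {..<n} \<and> j \<in> B i}"
    by (auto simp: B_def)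
  then have owners: "Pi_pmf {(j, i). j \<in> J \<and> i < n \<and> asg j i} (0, 0) (\<lambda>_. Q) = map_pmf (\<lambda>h (j, i). h i j) M"
    using Pi_pmf_uncurry[of "{..<n}" B "(0, 0)" "\<lambda>_. Q"] fin_B by (simp add: M_def)
  have "map_pmf diffsum (Pi_pmf (B i) (0, 0) (\<lambda>_. Q)) = polya_diff_pmf 1 p" if "i < n" for i
    unfolding diffsum_def[abs_def] Q_def
    using assms(3-5) p that by (intro map_pmf_sum_Pi_pmf_polya_diff) (auto simp: B_def)
  then have "Pi_pmf {..<n} 0 (\<lambda>_. polya_diff_pmf 1 p) = Pi_pmf {..<n} 0 (\<lambda>i. map_pmf diffsum (Pi_pmf (B i) (0, 0) (\<lambda>_. Q)))"
    by (intro Pi_pmf_cong) auto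
  also have "\<dots> = map_pmf (\<lambda>h. diffsum \<circ> h) M"
    unfolding M_def by (rule Pi_pmf_map) (simp_all add: diffsum_def)
  finally have noise: "Pi_pmf {..<n} 0 (\<lambda>_. polya_diff_pmf 1 p) = map_pmf (\<lambda>h. diffsum \<circ> h) M" .
  have support: "h i j = (0, 0)" if "h \<in> set_pmf M" "\<not> (i < n \<and> asg j i)" for h i j
    using set_pmf_Pi_pmf_Pi_pmf_outside[of "{..<n}" B h] that fin_B by (auto simp: M_def B_def)
  show ?thesis
    unfolding scheme_output_def p_def[symmetric] Q_def[symmetric] owners noise pmf.map_comp
  proof (rule map_pmf_cong[OF refl], rule ext)
    fix h i assume h: "h \<in> set_pmf M"
    have "(\<Sum>j\<in>J. if asg j i then (if occurs (cand i) (d j) then 1 else 0)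
                 + int (fst (h i j)) - int (snd (h i j)) else 0)
        = (\<Sum>j\<in>J. if asg j i \<and> occurs (cand i) (d j) then 1 else 0) + diffsum (h i)"
      if "i < n"
      unfolding diffsum_def sum.distrib[symmetric] using support[OF h] that by (intro sum.cong) auto
    moreover have "diffsum (h i) = 0" if "\<not> i < n"
      unfolding diffsum_def using support[OF h] that by simp
    ultimately show "((\<lambda>N i. if i < n then \<Sum>j\<in>J. if asg j i then (if occurs (cand i) (d j) then 1 else 0)
                 + int (fst (N (j, i))) - int (snd (N (j, i))) else 0 else 0) \<circ> (\<lambda>h (j, i). h i j)) h i
        = ((\<lambda>v i. assigned_occurrences J n asg cand occurs d i + v i) \<circ> (\<lambda>h. diffsum \<circ> h)) h i"
      by (simp add: assigned_occurrences_def cong: if_cong)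
  qed
qed

lemma pmf_scheme_output_le_neighbour:
  fixes J :: "'o set" and d d' :: "'o \<Rightarrow> 'd"
  assumes "\<epsilon> > 0" "K \<ge> 1" "P \<ge> 1" "finite J" "\<forall>i<n. card {j \<in> J. asg j i} = P"
    and "\<forall>j\<in>J. card {i. i < n \<and> asg j i} \<le> K"
    and "j0 \<in> J" "\<forall>j. j \<noteq> j0 \<longrightarrow> d j = d' j"
  shows "pmf (scheme_output \<epsilon> K P J n asg cand occurs d) z
           \<le> exp \<epsilon> * pmf (scheme_output \<epsilon> K P J n asg cand occurs d') z"
proof -
  define p where "p = exp (- \<epsilon> / real K)"
  have p: "0 < p" "p < 1"
    using assms(1,2) by (auto simp: p_def)
  let ?c = "assigned_occurrences J n asg cand occurs"
  let ?\<rho> = "\<lambda>i. if asg j0 i then 1 / p else 1"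
  have "pmf (scheme_output \<epsilon> K P J n asg cand occurs d) z
      \<le> (\<Prod>i<n. ?\<rho> i) * pmf (scheme_output \<epsilon> K P J n asg cand occurs d') z"
    unfolding scheme_output_eq_map_pmf_add_Pi_pmf[OF assms(1-5)] p_def[symmetric]
  proof (rule pmf_map_pmf_add_Pi_pmf_le)
    show "0 \<le> ?\<rho> i" for i
      using p by simp
    show "?c d i = ?c d' i" if "i \<notin> {..<n}" for i
      using that by (simp add: assigned_occurrences_def)
    fix i x
    have \<delta>: "\<bar>?c d i - ?c d' i\<bar> \<le> (if asg j0 i then 1 else 0)"
      using assms(4,7,8) by (rule assigned_occurrences_neighbour)
    show "pmf (polya_diff_pmf 1 p) x \<le> ?\<rho> i * pmf (polya_diff_pmf 1 p) (x + (?c d i - ?c d' i))"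
      using \<delta> pmf_polya_diff_pmf_1_le_shift[OF p] by (cases "asg j0 i") auto
  qed simp
  also have "(\<Prod>i<n. ?\<rho> i) = (1 / p) ^ card {i. i < n \<and> asg j0 i}"
    by (simp add: prod.If_cases Int_def)
  also have "\<dots> \<le> (1 / p) ^ K"
    using assms(6,7) p by (intro power_increasing) auto
  also have "(1 / p) ^ K = exp \<epsilon>"
    using assms(2) by (simp add: p_def exp_minus exp_of_nat_mult[symmetric] field_simps)
  finally show ?thesis
    by (simp add: mult_right_mono)
qed

theorem theorem2:
  fixes \<epsilon> :: real and K P n :: nat and J :: "'o set"
    and asg :: "'o \<Rightarrow> nat \<Rightarrow> bool" and cand :: "nat \<Rightarrow> 'c"
    and occurs :: "'c \<Rightarrow> 'd \<Rightarrow> bool"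
  assumes "\<epsilon> > 0" and "K \<ge> 1" and "P \<ge> 1" and "finite J"
    and "\<forall>i<n. card {j \<in> J. asg j i} = P"
    and "\<forall>j\<in>J. card {i. i < n \<and> asg j i} \<le> K"
  shows "\<forall>j0\<in>J. \<forall>(d :: 'o \<Rightarrow> 'd) d'. (\<forall>j. j \<noteq> j0 \<longrightarrow> d j = d' j) \<longrightarrow>
           (\<forall>Out. measure_pmf.prob (scheme_output \<epsilon> K P J n asg cand occurs d) Out
                \<le> exp \<epsilon> * measure_pmf.prob (scheme_output \<epsilon> K P J n asg cand occurs d') Out)"
  using pmf_scheme_output_le_neighbour[OF assms] by (auto intro!: measure_pmf_prob_le_mult)

end
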